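(* Let $\mathcal{G}=(\mathcal{V},\mathcal{E})$ be an undirected graph with nodes $1,\dots,n$ and edges indexed $1,\dots,E$, and let $\mathcal{S}_i$ be the set of edges incident to node $i$. For every $z\in\mathbb{R}^E$, $$\left(\|z\|_{\mathrm{SM}}^*\right)^2\ge\frac12\left(\|z\|_{\mathrm{SMNO}}^*\right)^2.$$
   Context: Convention: a maximum over an empty set is $0$. Define $\|x\|_{\mathrm{SM}}=\sqrt{\sum_{i=1}^n\max_{j\in\mathcal{S}_i}x_j^2}$ on $\mathbb{R}^E$ and its dual norm $\|z\|_{\mathrm{SM}}^*=\sup_x\{z^Tx:\|x\|_{\mathrm{SM}}\le1\}$. An assignment is a choice, for each edge $\ell\equiv(i,j)$, of exactly one of its two endpoints; it yields pairwise disjoint sets $\mathcal{S}_i'\subseteq\mathcal{S}_i$ (possibly empty) whose union is all edges, where $\mathcal{S}_i'$ is the set of edges assigned to $i$. For $x\in\mathbb{R}^E$ let $\varphi(x)=\max$ over all assignments of $\sum_{i=1}^n\max_{\ell\in\mathcal{S}_i'}x_\ell^2$ (the maximizing assignment $\{\mathcal{S}_i^*\}$ depends on $x$). Then $\|z\|_{\mathrm{SMNO}}^*=\sup_x\{z^Tx:\sqrt{\varphi(x)}\le1\}$, i.e. the supremum of $z^Tx$ over $x$ subject to $\sqrt{\sum_i\max_{\ell\in\mathcal{S}_i^*}x_\ell^2}\le1$ with $\{\mathcal{S}^*_i\}$ the assignment maximizing $\sum_i\max_{\ell\in\mathcal{S}_i'}x_\ell^2$. *)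

theory Defs
  imports Complex_Main
begin

definition valid_graph :: "nat \<Rightarrow> nat \<Rightarrow> (nat \<Rightarrow> nat \<times> nat) \<Rightarrow> bool" where
  "valid_graph n E ends \<longleftrightarrow>
     (\<forall>l\<in>{1..E}. fst (ends l) \<in> {1..n} \<and> snd (ends l) \<in> {1..n} \<and> fst (ends l) \<noteq> snd (ends l))"

definition incident :: "nat \<Rightarrow> (nat \<Rightarrow> nat \<times> nat) \<Rightarrow> nat \<Rightarrow> nat set" where
  "incident E ends i = {l \<in> {1..E}. fst (ends l) = i \<or> snd (ends l) = i}"

definition maxsq :: "nat set \<Rightarrow> (nat \<Rightarrow> real) \<Rightarrow> real" where
  "maxsq A x = (if A = {} then 0 else Max ((\<lambda>l. (x l)^2) ` A))"

definition sm_norm :: "nat \<Rightarrow> nat \<Rightarrow> (nat \<Rightarrow> nat \<times> nat) \<Rightarrow> (nat \<Rightarrow> real) \<Rightarrow> real" where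
  "sm_norm n E ends x = sqrt (\<Sum>i=1..n. maxsq (incident E ends i) x)"

definition is_assignment :: "nat \<Rightarrow> (nat \<Rightarrow> nat \<times> nat) \<Rightarrow> (nat \<Rightarrow> nat) \<Rightarrow> bool" where
  "is_assignment E ends a \<longleftrightarrow> (\<forall>l\<in>{1..E}. a l = fst (ends l) \<or> a l = snd (ends l))"

definition assigned :: "nat \<Rightarrow> (nat \<Rightarrow> nat) \<Rightarrow> nat \<Rightarrow> nat set" where
  "assigned E a i = {l \<in> {1..E}. a l = i}"

definition phi :: "nat \<Rightarrow> nat \<Rightarrow> (nat \<Rightarrow> nat \<times> nat) \<Rightarrow> (nat \<Rightarrow> real) \<Rightarrow> real" where
  "phi n E ends x = Sup {(\<Sum>i=1..n. maxsq (assigned E a i) x) | a. is_assignment E ends a}"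

definition smno_norm :: "nat \<Rightarrow> nat \<Rightarrow> (nat \<Rightarrow> nat \<times> nat) \<Rightarrow> (nat \<Rightarrow> real) \<Rightarrow> real" where
  "smno_norm n E ends x = sqrt (phi n E ends x)"

definition dual :: "nat \<Rightarrow> ((nat \<Rightarrow> real) \<Rightarrow> real) \<Rightarrow> (nat \<Rightarrow> real) \<Rightarrow> real" where
  "dual E N z = Sup {(\<Sum>l=1..E. z l * x l) | x. N x \<le> 1}"

end

theory Submission
  imports Defs
begin

text \<open>The first-endpoint and the second-endpoint assignments together assign to every node
  all of its incident edges, so \<open>\<parallel>x\<parallel>\<^sub>S\<^sub>M\<^sup>2 \<le> \<phi>(x) + \<phi>(x)\<close>. Hence \<open>x / sqrt 2\<close> lies in the
  unit ball of \<open>\<parallel>_\<parallel>\<^sub>S\<^sub>M\<close> whenever \<open>\<phi>(x) \<le> 1\<close>, which gives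
  \<open>\<parallel>z\<parallel>\<^sup>*\<^sub>S\<^sub>M\<^sub>N\<^sub>O \<le> sqrt 2 \<parallel>z\<parallel>\<^sup>*\<^sub>S\<^sub>M\<close>.\<close>

lemma sq_le_maxsq: "finite A \<Longrightarrow> l \<in> A \<Longrightarrow> (x l)^2 \<le> maxsq A x"
  unfolding maxsq_def by (auto intro: Max_ge)

lemma maxsq_nonneg:
  assumes "finite A"
  shows "0 \<le> maxsq A x"
proof (cases "A = {}")
  case False
  then obtain l where "l \<in> A"
    by blast
  then show ?thesis
    using sq_le_maxsq[OF assms, of l x] zero_le_power2[of "x l"] by linarith
qed (simp add: maxsq_def)

lemma maxsq_Un:
  assumes "finite A" "finite B"
  shows "maxsq (A \<union> B) x = max (maxsq A x) (maxsq B x)"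
  using assms maxsq_nonneg[of A x] maxsq_nonneg[of B x]
  by (cases "A = {}"; cases "B = {}")
    (auto simp: maxsq_def image_Un Max_Un max_absorb1 max_absorb2)

lemma maxsq_mono: "finite B \<Longrightarrow> A \<subseteq> B \<Longrightarrow> maxsq A x \<le> maxsq B x"
  using maxsq_Un[of A "B - A" x]
  by (metis Un_Diff_cancel finite_Diff finite_subset max.cobounded1 sup.absorb2)

lemma maxsq_mult:
  assumes "finite A"
  shows "maxsq A (\<lambda>l. c * x l) = c^2 * maxsq A x"
proof (cases "A = {}")
  case False
  have "mono (\<lambda>t. c^2 * (t::real))"
    by (rule monoI) (simp add: mult_left_mono)
  then have "c^2 * Max ((\<lambda>l. (x l)^2) ` A) = Max ((\<lambda>t. c^2 * t) ` (\<lambda>l. (x l)^2) ` A)"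
    using assms False by (intro mono_Max_commute) auto
  then show ?thesis
    using False by (simp add: maxsq_def image_image power_mult_distrib)
qed (simp add: maxsq_def)

lemma maxsq_zero: "maxsq A (\<lambda>_. 0) = 0"
  by (simp add: maxsq_def image_constant_conv)

lemma sq_le_sum_maxsq:
  fixes n :: nat
  assumes "\<And>i. finite (A i)" "i \<in> {1..n}" "l \<in> A i"
  shows "(x l)^2 \<le> (\<Sum>i=1..n. maxsq (A i) x)"
proof -
  have "(x l)^2 \<le> maxsq (A i) x"
    using assms by (intro sq_le_maxsq)
  also have "\<dots> \<le> (\<Sum>i=1..n. maxsq (A i) x)"
    using assms by (intro member_le_sum maxsq_nonneg) auto
  finally show ?thesis .
qed

lemma finite_incident: "finite (incident E ends i)"
  unfolding incident_def by simp

lemma finite_assigned: "finite (assigned E a i)"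
  unfolding assigned_def by simp

lemma assigned_subset_incident:
  "is_assignment E ends a \<Longrightarrow> assigned E a i \<subseteq> incident E ends i"
  unfolding is_assignment_def assigned_def incident_def by force

lemma incident_eq_assigned_Un:
  "incident E ends i = assigned E (fst \<circ> ends) i \<union> assigned E (snd \<circ> ends) i"
  unfolding incident_def assigned_def by auto

lemma is_assignment_fst: "is_assignment E ends (fst \<circ> ends)"
  and is_assignment_snd: "is_assignment E ends (snd \<circ> ends)"
  unfolding is_assignment_def by auto

lemma sum_assigned_le_phi:
  assumes "is_assignment E ends a"
  shows "(\<Sum>i=1..n. maxsq (assigned E a i) x) \<le> phi n E ends x"
proof -
  have "bdd_above {(\<Sum>i=1..n. maxsq (assigned E a i) x) | a. is_assignment E ends a}"
    by (rule bdd_aboveI[where M = "\<Sum>i=1..n. maxsq (incident E ends i) x"])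
      (auto intro!: sum_mono maxsq_mono finite_incident assigned_subset_incident)
  then show ?thesis
    unfolding phi_def using assms by (auto intro!: cSup_upper)
qed

lemma phi_zero: "phi n E ends (\<lambda>_. 0) = 0"
proof -
  have "{(\<Sum>i=1..n. maxsq (assigned E a i) (\<lambda>_. 0)) | a. is_assignment E ends a} = {0}"
    using is_assignment_fst by (auto simp: maxsq_zero)
  then show ?thesis
    unfolding phi_def by simp
qed

lemma sum_incident_le_two_phi:
  "(\<Sum>i=1..n. maxsq (incident E ends i) x) \<le> 2 * phi n E ends x"
proof -
  let ?A = "\<lambda>i. maxsq (assigned E (fst \<circ> ends) i) x"
  let ?B = "\<lambda>i. maxsq (assigned E (snd \<circ> ends) i) x"
  have "(\<Sum>i=1..n. maxsq (incident E ends i) x) = (\<Sum>i=1..n. max (?A i) (?B i))"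
    by (simp add: incident_eq_assigned_Un maxsq_Un finite_assigned)
  also have "\<dots> \<le> (\<Sum>i=1..n. ?A i) + (\<Sum>i=1..n. ?B i)"
    unfolding sum.distrib[symmetric]
    by (intro sum_mono) (simp add: maxsq_nonneg finite_assigned)
  also have "\<dots> \<le> 2 * phi n E ends x"
    using sum_assigned_le_phi[OF is_assignment_fst, where E = E and ends = ends and n = n and x = x]
      sum_assigned_le_phi[OF is_assignment_snd, where E = E and ends = ends and n = n and x = x]
    by linarith
  finally show ?thesis .
qed

lemma sm_norm_le_sqrt2_smno_norm: "sm_norm n E ends x \<le> sqrt 2 * smno_norm n E ends x"
  unfolding sm_norm_def smno_norm_def real_sqrt_mult[symmetric]
  by (intro real_sqrt_le_mono sum_incident_le_two_phi)

lemma sm_norm_divide: "sm_norm n E ends (\<lambda>l. x l / c) = sm_norm n E ends x / \<bar>c\<bar>"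
proof -
  have "(\<Sum>i=1..n. maxsq (incident E ends i) (\<lambda>l. inverse c * x l))
      = (inverse c)^2 * (\<Sum>i=1..n. maxsq (incident E ends i) x)"
    by (simp add: maxsq_mult finite_incident sum_distrib_left)
  then show ?thesis
    by (simp add: sm_norm_def real_sqrt_mult divide_inverse mult.commute abs_inverse)
qed

lemma abs_le_sm_norm:
  assumes "valid_graph n E ends" "l \<in> {1..E}"
  shows "\<bar>x l\<bar> \<le> sm_norm n E ends x"
proof -
  have "(x l)^2 \<le> (\<Sum>i=1..n. maxsq (incident E ends i) x)"
    using assms by (intro sq_le_sum_maxsq[where i = "fst (ends l)"] finite_incident)
      (auto simp: valid_graph_def incident_def)
  then show ?thesis
    unfolding sm_norm_def by (metis real_sqrt_abs real_sqrt_le_mono)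
qed

lemma abs_le_smno_norm:
  assumes "valid_graph n E ends" "l \<in> {1..E}"
  shows "\<bar>x l\<bar> \<le> smno_norm n E ends x"
proof -
  have "(x l)^2 \<le> (\<Sum>i=1..n. maxsq (assigned E (fst \<circ> ends) i) x)"
    using assms by (intro sq_le_sum_maxsq[where i = "fst (ends l)"] finite_assigned)
      (auto simp: valid_graph_def assigned_def)
  also have "\<dots> \<le> phi n E ends x"
    by (rule sum_assigned_le_phi[OF is_assignment_fst])
  finally show ?thesis
    unfolding smno_norm_def by (metis real_sqrt_abs real_sqrt_le_mono)
qed

lemma bdd_above_dual:
  fixes z :: "nat \<Rightarrow> real"
  assumes "\<And>x l. l \<in> {1..E} \<Longrightarrow> \<bar>x l\<bar> \<le> N x"
  shows "bdd_above {(\<Sum>l=1..E. z l * x l) | x. N x \<le> 1}"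
proof (rule bdd_aboveI[where M = "\<Sum>l=1..E. \<bar>z l\<bar>"])
  fix t
  assume "t \<in> {(\<Sum>l=1..E. z l * x l) | x. N x \<le> 1}"
  then obtain x where t: "t = (\<Sum>l=1..E. z l * x l)" and "N x \<le> 1"
    by blast
  then have "z l * x l \<le> \<bar>z l\<bar>" if "l \<in> {1..E}" for l
    using assms[OF that, of x] abs_ge_self[of "z l * x l"]
    by (metis abs_mult abs_ge_zero dual_order.trans mult_left_le)
  then show "t \<le> (\<Sum>l=1..E. \<bar>z l\<bar>)"
    unfolding t by (intro sum_mono)
qed

lemma dual_nonneg:
  assumes "\<And>x l. l \<in> {1..E} \<Longrightarrow> \<bar>x l\<bar> \<le> N x" "N (\<lambda>_. 0) \<le> 1"
  shows "0 \<le> dual E N z"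
  unfolding dual_def using assms(2)
  by (intro cSup_upper[OF _ bdd_above_dual[OF assms(1)]]) force

lemma dual_le_scaled_dual:
  assumes N: "\<And>x l. l \<in> {1..E} \<Longrightarrow> \<bar>x l\<bar> \<le> N x"
    and "M (\<lambda>_. 0) \<le> 1" "c > 0"
    and M_N: "\<And>x. M x \<le> 1 \<Longrightarrow> N (\<lambda>l. x l / c) \<le> 1"
  shows "dual E M z \<le> c * dual E N z"
  unfolding dual_def
proof (rule cSup_least, use assms(2) in force, clarify)
  fix x :: "nat \<Rightarrow> real"
  assume "M x \<le> 1"
  then have "N (\<lambda>l. x l / c) \<le> 1"
    by (rule M_N)
  then have "(\<Sum>l=1..E. z l * (x l / c)) \<in> {(\<Sum>l=1..E. z l * x l) | x. N x \<le> 1}"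
    by (intro CollectI exI[where x = "\<lambda>l. x l / c"] conjI refl)
  then have "(\<Sum>l=1..E. z l * (x l / c)) \<le> Sup {(\<Sum>l=1..E. z l * x l) | x. N x \<le> 1}"
    by (rule cSup_upper[OF _ bdd_above_dual[OF N]])
  moreover have "(\<Sum>l=1..E. z l * x l) = c * (\<Sum>l=1..E. z l * (x l / c))"
    using \<open>c > 0\<close> by (simp add: sum_distrib_left)
  ultimately show "(\<Sum>l=1..E. z l * x l) \<le> c * Sup {(\<Sum>l=1..E. z l * x l) | x. N x \<le> 1}"
    using \<open>c > 0\<close> by simp
qed

theorem lemma5:
  fixes n E :: nat and ends :: "nat \<Rightarrow> nat \<times> nat" and z :: "nat \<Rightarrow> real"
  assumes "valid_graph n E ends"
  shows "(dual E (sm_norm n E ends) z)^2 \<ge> 1/2 * (dual E (smno_norm n E ends) z)^2"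
proof -
  have smno_zero: "smno_norm n E ends (\<lambda>_. 0) \<le> 1"
    by (simp add: smno_norm_def phi_zero)
  have "0 \<le> dual E (smno_norm n E ends) z"
    using abs_le_smno_norm[OF assms] smno_zero by (rule dual_nonneg)
  moreover have "dual E (smno_norm n E ends) z \<le> sqrt 2 * dual E (sm_norm n E ends) z"
  proof (rule dual_le_scaled_dual[where N = "sm_norm n E ends"])
    fix x
    assume "smno_norm n E ends x \<le> 1"
    then have "sqrt 2 * smno_norm n E ends x \<le> sqrt 2"
      by (simp add: mult_left_le)
    then have "sm_norm n E ends x \<le> sqrt 2"
      using sm_norm_le_sqrt2_smno_norm[of n E ends x] by linarith
    then show "sm_norm n E ends (\<lambda>l. x l / sqrt 2) \<le> 1"
      by (simp add: sm_norm_divide)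
  qed (use abs_le_sm_norm[OF assms] smno_zero in auto)
  ultimately have "(dual E (smno_norm n E ends) z)^2 \<le> (sqrt 2 * dual E (sm_norm n E ends) z)^2"
    by (simp add: power_mono)
  then show ?thesis
    by (simp add: power_mult_distrib)
qed

end
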